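(* Let $C$ be a bivariate SI copula and $(U,V)$ a random vector with distribution function $C$. For $p\in[0,1]$ define $T_p:[0,1]\to[0,1]$ by $T_p(u)=u$ if $0\le u\le 1-p$ and $T_p(u)=1-(u-(1-p))$ if $1-p<u\le1$, and let $C_p$ be the distribution function of $(T_p(U),V)$. Then $C_p$ is a copula for every $p\in[0,1]$, and (i) $C_0=C=C^\uparrow$ and $C_1=C^\downarrow$; (ii) $C_p=_{\partial_1S}C$ for all $p\in[0,1]$; (iii) $C_p(u,v)\ge C_{p'}(u,v)$ for all $(u,v)\in[0,1]^2$ whenever $0\le p\le p'\le1$; (iv) $p\mapsto C_p$ is continuous with respect to pointwise convergence.
   Context: A bivariate copula is a function $C:[0,1]^2\to[0,1]$ that is grounded, has uniform margins and is 2-increasing. A copula is SI (resp. SD) if it is concave (resp. convex) in its first argument (equivalently, $P(V\ge v\mid U=u)$ is increasing, resp. decreasing, in $u$ a.e. for each $v$). For measurable $f,g:[0,1]\to[0,1]$, $f\prec_S g$ means $\int_0^x f^*\le\int_0^x g^*$ for all $x\in(0,1)$ and $\int_0^1 f=\int_0^1 g$, where $h^*$ is the decreasing rearrangement of $h$. For copulas $D,E$: $D\le_{\partial_1S}E$ if $\partial_1D(\cdot,v)\prec_S\partial_1E(\cdot,v)$ for all $v$ ($\partial_1$ = partial derivative in first argument), and $D=_{\partial_1S}E$ if both directions hold. For each copula $C$, $C^\uparrow$ (resp. $C^\downarrow$) denotes the unique SI (resp. SD) copula with $C^\uparrow=_{\partial_1S}C$ (resp. $C^\downarrow=_{\partial_1S}C$).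 *)

theory Defs
  imports "HOL-Probability.Probability"
begin

definition unit_sq :: "(real \<times> real) set" where
  "unit_sq = {0..1} \<times> {0..1}"

definition copula :: "(real \<Rightarrow> real \<Rightarrow> real) \<Rightarrow> bool" where
  "copula C \<longleftrightarrow>
     (\<forall>u\<in>{0..1}. \<forall>v\<in>{0..1}. C u v \<in> {0..1}) \<and>
     (\<forall>t\<in>{0..1}. C t 0 = 0 \<and> C 0 t = 0) \<and>
     (\<forall>t\<in>{0..1}. C t 1 = t \<and> C 1 t = t) \<and>
     (\<forall>u1\<in>{0..1}. \<forall>u2\<in>{0..1}. \<forall>v1\<in>{0..1}. \<forall>v2\<in>{0..1}.
        u1 \<le> u2 \<longrightarrow> v1 \<le> v2 \<longrightarrow> C u2 v2 - C u2 v1 - C u1 v2 + C u1 v1 \<ge> 0)"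

definition SI_copula :: "(real \<Rightarrow> real \<Rightarrow> real) \<Rightarrow> bool" where
  "SI_copula C \<longleftrightarrow> copula C \<and> (\<forall>v\<in>{0..1}. concave_on {0..1} (\<lambda>u. C u v))"

definition SD_copula :: "(real \<Rightarrow> real \<Rightarrow> real) \<Rightarrow> bool" where
  "SD_copula C \<longleftrightarrow> copula C \<and> (\<forall>v\<in>{0..1}. convex_on {0..1} (\<lambda>u. C u v))"

definition drearr :: "(real \<Rightarrow> real) \<Rightarrow> real \<Rightarrow> real" where
  "drearr f x = Inf {t. measure lebesgue {s\<in>{0..1}. f s > t} \<le> x}"

definition schur_le :: "(real \<Rightarrow> real) \<Rightarrow> (real \<Rightarrow> real) \<Rightarrow> bool" where
  "schur_le f g \<longleftrightarrow>
     (\<forall>x\<in>{0<..<1}. (LINT s:{0..x}|lebesgue. drearr f s) \<le> (LINT s:{0..x}|lebesgue. drearr g s)) \<and>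
     (LINT s:{0..1}|lebesgue. f s) = (LINT s:{0..1}|lebesgue. g s)"

text \<open>Partial derivative in the first argument (exists a.e. for copulas).\<close>
definition partial1 :: "(real \<Rightarrow> real \<Rightarrow> real) \<Rightarrow> real \<Rightarrow> real \<Rightarrow> real" where
  "partial1 C u v = deriv (\<lambda>x. C x v) u"

definition d1S_le :: "(real \<Rightarrow> real \<Rightarrow> real) \<Rightarrow> (real \<Rightarrow> real \<Rightarrow> real) \<Rightarrow> bool" where
  "d1S_le D E \<longleftrightarrow> (\<forall>v\<in>{0..1}. schur_le (\<lambda>u. partial1 D u v) (\<lambda>u. partial1 E u v))"

definition d1S_eq :: "(real \<Rightarrow> real \<Rightarrow> real) \<Rightarrow> (real \<Rightarrow> real \<Rightarrow> real) \<Rightarrow> bool" where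
  "d1S_eq D E \<longleftrightarrow> d1S_le D E \<and> d1S_le E D"

text \<open>Copulas are identified with their restriction to the unit square; to make the
  description unique as a HOL function we normalise the values outside the square to 0.\<close>
definition C_up :: "(real \<Rightarrow> real \<Rightarrow> real) \<Rightarrow> (real \<Rightarrow> real \<Rightarrow> real)" where
  "C_up C = (THE D. SI_copula D \<and> d1S_eq D C \<and> (\<forall>u v. (u, v) \<notin> unit_sq \<longrightarrow> D u v = 0))"

definition C_down :: "(real \<Rightarrow> real \<Rightarrow> real) \<Rightarrow> (real \<Rightarrow> real \<Rightarrow> real)" where
  "C_down C = (THE D. SD_copula D \<and> d1S_eq D C \<and> (\<forall>u v. (u, v) \<notin> unit_sq \<longrightarrow> D u v = 0))"

definition Tp :: "real \<Rightarrow> real \<Rightarrow> real" where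
  "Tp p u = (if u \<le> 1 - p then u else 1 - (u - (1 - p)))"

definition Cp :: "'a measure \<Rightarrow> ('a \<Rightarrow> real) \<Rightarrow> ('a \<Rightarrow> real) \<Rightarrow> real \<Rightarrow> real \<Rightarrow> real \<Rightarrow> real" where
  "Cp M U V p u v = measure M {\<omega>\<in>space M. Tp p (U \<omega>) \<le> u \<and> V \<omega> \<le> v}"

end

theory Submission
  imports Defs
begin

text \<open>
  Up to null events, T_p(U) \<le> u means U \<le> min u (1 - p) or U > 2 - p - u, because U is uniform
  and has no atoms. Hence each section C_p(., v) is obtained from the concave section h = C(., v)
  by keeping h on [0, 1 - p] and running through its increments on [1 - p, 1] in reverse order.
  Concavity makes increments shrink to the right, which gives monotonicity in p; continuity in p
  is inherited from h. The derivative h' exists off a countable set and is decreasing; the derivative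
  of the reflected section is h' on [0, 1 - p) and the reflection of h' on (1 - p, 1], so it has the
  same distribution function, hence the same decreasing rearrangement and the same integral as h'.
  Finally, for an SI (resp. SD) copula D, integrating the decreasing rearrangement of the first
  partial derivative of D(., v) over [0, x] recovers D(x, v) (resp. v - D(1 - x, v)). So an SI or
  an SD copula is determined by its class for the partial-derivative Schur order; as C is SI and
  C_1 is SD, this identifies C^up = C and C^down = C_1.
\<close>

section \<open>Derivatives of convex functions\<close>

lemma countable_disjoint_open_intervals:
  fixes L R :: "real \<Rightarrow> real"
  assumes nonempty: "\<And>x. x \<in> J \<Longrightarrow> L x < R x"
    and disjoint: "\<And>x z. x \<in> J \<Longrightarrow> z \<in> J \<Longrightarrow> x < z \<Longrightarrow> R x \<le> L z"
  shows "countable J"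
proof -
  obtain q where q: "\<And>x. x \<in> J \<Longrightarrow> q x \<in> \<rat> \<and> L x < q x \<and> q x < R x"
    using Rats_dense_in_real[OF nonempty] by metis
  have "inj_on q J"
  proof (rule inj_onI)
    fix x z assume "x \<in> J" "z \<in> J" "q x = q z"
    then show "x = z"
      using q[of x] q[of z] disjoint[of x z] disjoint[of z x]
      by (cases x z rule: linorder_cases) fastforce+
  qed
  moreover have "q ` J \<subseteq> \<rat>"
    using q by blast
  ultimately show ?thesis
    by (meson countable_image_inj_on countable_rat countable_subset)
qed

lemma mono_on_tendsto_at_right_Inf:
  fixes \<phi> :: "real \<Rightarrow> real"
  assumes mono: "mono_on {x<..b} \<phi>" and "x < b" and bdd: "bdd_below (\<phi> ` {x<..b})"
  shows "(\<phi> \<longlongrightarrow> Inf (\<phi> ` {x<..b})) (at_right x)"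
proof (rule order_tendstoI)
  fix c assume "c < Inf (\<phi> ` {x<..b})"
  then show "\<forall>\<^sub>F y in at_right x. c < \<phi> y"
    unfolding eventually_at_right_field using \<open>x < b\<close>
    by (intro exI[of _ b]) (auto intro: less_le_trans[OF _ cInf_lower[OF _ bdd]])
next
  fix c assume "Inf (\<phi> ` {x<..b}) < c"
  then obtain y0 where y0: "y0 \<in> {x<..b}" "\<phi> y0 < c"
    using cInf_lessD[of "\<phi> ` {x<..b}"] \<open>x < b\<close> by fastforce
  show "\<forall>\<^sub>F y in at_right x. \<phi> y < c"
    unfolding eventually_at_right_field
  proof (intro exI[of _ y0] conjI allI impI)
    fix y assume "x < y" "y < y0"
    then have "\<phi> y \<le> \<phi> y0" using y0 by (intro mono_onD[OF mono]) auto
    then show "\<phi> y < c" using y0 by linarith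
  qed (use y0 in auto)
qed

lemma mono_on_tendsto_at_left_Sup:
  fixes \<phi> :: "real \<Rightarrow> real"
  assumes mono: "mono_on {a..<x} \<phi>" and "a < x" and bdd: "bdd_above (\<phi> ` {a..<x})"
  shows "(\<phi> \<longlongrightarrow> Sup (\<phi> ` {a..<x})) (at_left x)"
proof (rule order_tendstoI)
  fix c assume "Sup (\<phi> ` {a..<x}) < c"
  then show "\<forall>\<^sub>F y in at_left x. \<phi> y < c"
    unfolding eventually_at_left_field using \<open>a < x\<close>
    by (intro exI[of _ a]) (auto intro: le_less_trans[OF cSup_upper[OF _ bdd]])
next
  fix c assume "c < Sup (\<phi> ` {a..<x})"
  then obtain y0 where y0: "y0 \<in> {a..<x}" "c < \<phi> y0"
    using less_cSupD[of "\<phi> ` {a..<x}"] \<open>a < x\<close> by fastforce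
  show "\<forall>\<^sub>F y in at_left x. c < \<phi> y"
    unfolding eventually_at_left_field using y0
    by (intro exI[of _ y0]) (auto intro: less_le_trans[OF _ mono_onD[OF mono]])
qed

lemma convex_on_slope_mono:
  fixes g :: "real \<Rightarrow> real"
  assumes cv: "convex_on {a..b} g"
    and "x \<in> {a..b}" "y \<in> {a..b}" "z \<in> {a..b}" "y \<le> z" "y \<noteq> x" "z \<noteq> x"
  shows "(g x - g y) / (x - y) \<le> (g x - g z) / (x - z)"
proof -
  define Q where "Q x y = (g x - g y) / (x - y)" for x y
  have Q_sym: "Q x y = Q y x" for x y
    unfolding Q_def by (metis minus_diff_eq minus_divide_divide)
  have "Q x y \<le> Q x z"
  proof (cases x y rule: linorder_cases)
    case less
    then show ?thesis
      using convex_on_slope_le(1)[OF cv \<open>x \<in> _\<close> \<open>z \<in> _\<close> less] \<open>y \<le> z\<close>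
      by (cases "y = z") (auto simp: Q_def)
  next
    case greater
    show ?thesis
    proof (cases x z rule: linorder_cases)
      case greater
      then have "Q y x \<le> Q z x" if "y < z"
        using convex_on_slope_le(2)[OF cv \<open>y \<in> _\<close> \<open>x \<in> _\<close> that] by (simp add: Q_def)
      then show ?thesis
        using Q_sym[of x y] Q_sym[of x z] \<open>y \<le> z\<close> by (cases "y = z") auto
    next
      case less
      then have "Q y x \<le> Q y z" "Q y z \<le> Q x z"
        using convex_on_slope_le[OF cv \<open>y \<in> _\<close> \<open>z \<in> _\<close> \<open>y < x\<close>] by (simp_all add: Q_def)
      then show ?thesis
        using Q_sym[of x y] by linarith
    qed (use assms in simp)
  qed (use assms in simp)
  then show ?thesis
    by (simp add: Q_def)
qed

lemma convex_on_differentiable_off_countable: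
  fixes g :: "real \<Rightarrow> real"
  assumes cv: "convex_on {a..b} g"
  obtains N where "countable N" "\<And>x. x \<in> {a<..<b} - N \<Longrightarrow> (g has_real_derivative deriv g x) (at x)"
proof -
  \<comment> \<open>Off the countably many corners, the left and right derivatives L and R coincide.\<close>
  define Q where "Q x y = (g x - g y) / (x - y)" for x y
  have Q_sym: "Q x y = Q y x" for x y
    unfolding Q_def by (metis minus_diff_eq minus_divide_divide)
  have Q_mono: "Q x y \<le> Q x z"
    if "x \<in> {a..b}" "y \<in> {a..b}" "z \<in> {a..b}" "y \<le> z" "y \<noteq> x" "z \<noteq> x" for x y z
    using convex_on_slope_mono[OF cv that] by (simp add: Q_def)
  define R where "R x = Inf (Q x ` {x<..b})" for x
  define L where "L x = Sup (Q x ` {a..<x})" for x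
  have left_le_right: "Q x w \<le> Q x z" if "x \<in> {a<..<b}" "w \<in> {a..<x}" "z \<in> {x<..b}" for x w z
    using that by (intro Q_mono) auto
  have R_le: "R x \<le> Q x z" and le_L: "Q x w \<le> L x" and L_le_R: "L x \<le> R x"
    if "x \<in> {a<..<b}" "w \<in> {a..<x}" "z \<in> {x<..b}" for x w z
  proof -
    have bdd: "bdd_below (Q x ` {x<..b})" "bdd_above (Q x ` {a..<x})"
      using left_le_right that by (auto intro!: bdd_belowI2[where m = "Q x w"] bdd_aboveI2[where M = "Q x z"])
    show "R x \<le> Q x z" "Q x w \<le> L x"
      unfolding R_def L_def using that by (auto intro: cInf_lower cSup_upper bdd)
    show "L x \<le> R x"
      unfolding R_def L_def using that left_le_right
      by (intro cSup_least cInf_greatest) auto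
  qed
  have R_L: "R x \<le> L z" if "x \<in> {a<..<b}" "z \<in> {a<..<b}" "x < z" for x z
    using R_le[of x a z] le_L[of z x b] that Q_sym[of x z] by auto
  define N where "N = {x \<in> {a<..<b}. L x < R x}"
  have "countable N"
    by (rule countable_disjoint_open_intervals[of N L R]) (auto simp: N_def intro: R_L)
  moreover have "(g has_real_derivative deriv g x) (at x)" if x: "x \<in> {a<..<b} - N" for x
  proof -
    have "L x = R x"
      using x L_le_R[of x a b] by (force simp: N_def)
    have "(Q x \<longlongrightarrow> R x) (at_left x)"
      unfolding \<open>L x = R x\<close>[symmetric] L_def using x left_le_right[of x _ b]
      by (intro mono_on_tendsto_at_left_Sup mono_onI Q_mono bdd_aboveI2[where M = "Q x b"]) auto
    moreover have "(Q x \<longlongrightarrow> R x) (at_right x)"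
      unfolding R_def using x left_le_right[of x a]
      by (intro mono_on_tendsto_at_right_Inf mono_onI Q_mono bdd_belowI2[where m = "Q x a"]) auto
    ultimately have "((\<lambda>y. Q y x) \<longlongrightarrow> R x) (at x)"
      unfolding Q_sym[of _ x] by (rule filterlim_split_at_real)
    then have "(g has_real_derivative R x) (at x)"
      unfolding has_field_derivative_iff Q_def .
    then show ?thesis
      by (simp add: DERIV_imp_deriv)
  qed
  ultimately show ?thesis
    using that by blast
qed

lemma concave_on_deriv_off_countable:
  fixes h :: "real \<Rightarrow> real"
  assumes conc: "concave_on {a..b} h"
  obtains N where "countable N" "a \<in> N" "b \<in> N"
    "\<And>x. x \<in> {a..b} - N \<Longrightarrow> (h has_real_derivative deriv h x) (at x)"
    "antimono_on ({a..b} - N) (deriv h)"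
proof -
  have cv: "convex_on {a..b} (\<lambda>x. - h x)"
    using conc by (simp add: concave_on_def)
  obtain N0 where "countable N0"
    and N0: "\<And>x. x \<in> {a<..<b} - N0 \<Longrightarrow> ((\<lambda>x. - h x) has_real_derivative deriv (\<lambda>x. - h x) x) (at x)"
    using convex_on_differentiable_off_countable[OF cv] by blast
  define N where "N = insert a (insert b N0)"
  have der: "(h has_real_derivative deriv h x) (at x)" if "x \<in> {a..b} - N" for x
  proof -
    have "(h has_real_derivative - deriv (\<lambda>x. - h x) x) (at x)"
      using DERIV_minus[OF N0[of x]] that by (auto simp: N_def)
    then show ?thesis
      by (simp add: DERIV_imp_deriv)
  qed
  have tangent: "h z - h x \<le> deriv h x * (z - x)" if "x \<in> {a..b} - N" "z \<in> {a..b}" for x z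
    using convex_on_imp_above_tangent[OF cv, of x z "- deriv h x"] DERIV_minus[OF der[OF that(1)]] that
    by (auto simp: N_def has_field_derivative_at_within)
  show ?thesis
  proof (rule that)
    show "countable N" "a \<in> N" "b \<in> N"
      using \<open>countable N0\<close> by (auto simp: N_def)
    show "(h has_real_derivative deriv h x) (at x)" if "x \<in> {a..b} - N" for x
      using der[OF that] .
    show "antimono_on ({a..b} - N) (deriv h)"
    proof (intro monotone_onI)
      fix x z assume "x \<in> {a..b} - N" "z \<in> {a..b} - N" "x \<le> z"
      show "deriv h z \<le> deriv h x"
      proof (cases "x = z")
        case False
        have "deriv h z * (z - x) \<le> deriv h x * (z - x)"
          using tangent[of x z] tangent[of z x] \<open>x \<in> _\<close> \<open>z \<in> _\<close> by (auto simp: algebra_simps)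
        then show ?thesis
          using False \<open>x \<le> z\<close> by (simp add: mult_le_cancel_right)
      qed simp
    qed
  qed
qed

lemma convex_on_cong:
  assumes "\<And>x. x \<in> S \<Longrightarrow> f x = g x"
  shows "convex_on S f \<longleftrightarrow> convex_on S g"
  using assms by (auto simp: convex_on_def convex_def)

lemma concave_on_cong:
  assumes "\<And>x. x \<in> S \<Longrightarrow> f x = g x"
  shows "concave_on S f \<longleftrightarrow> concave_on S g"
  unfolding concave_on_def using assms by (intro convex_on_cong) simp

lemma convex_on_reflect_unit_interval:
  fixes g :: "real \<Rightarrow> real"
  assumes "convex_on {0..1} g"
  shows "convex_on {0..1} (\<lambda>y. g (1 - y))"
proof (rule convex_onI)
  fix t x y :: real assume "0 < t" "t < 1" "x \<in> {0..1}" "y \<in> {0..1}"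
  moreover have "1 - ((1 - t) *\<^sub>R x + t *\<^sub>R y) = (1 - t) *\<^sub>R (1 - x) + t *\<^sub>R (1 - y)"
    by (simp add: algebra_simps)
  ultimately show "g (1 - ((1 - t) *\<^sub>R x + t *\<^sub>R y)) \<le> (1 - t) * g (1 - x) + t * g (1 - y)"
    using convex_onD[OF assms, of t "1 - x" "1 - y"] by simp
qed simp

lemma concave_on_reflect_unit_interval:
  fixes h :: "real \<Rightarrow> real"
  assumes "concave_on {0..1} h"
  shows "concave_on {0..1} (\<lambda>y. h (1 - y))"
  using convex_on_reflect_unit_interval[of "\<lambda>y. - h y"] assms by (simp add: concave_on_def)

lemma concave_on_increment_antimono:
  fixes h :: "real \<Rightarrow> real"
  assumes conc: "concave_on {a..b} h" and "a \<le> s" "s \<le> t" "0 \<le> l" "t + l \<le> b"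
  shows "h (t + l) - h t \<le> h (s + l) - h s"
proof (cases "s = t \<or> l = 0")
  case False
  define \<mu> where "\<mu> = l / (t + l - s)"
  have \<mu>: "0 \<le> \<mu>" "\<mu> \<le> 1" "\<mu> * (t + l - s) = l"
    using False assms by (auto simp: \<mu>_def divide_le_eq)
  have "(1 - \<mu>) *\<^sub>R s + \<mu> *\<^sub>R (t + l) = s + l" "(1 - \<mu>) *\<^sub>R (t + l) + \<mu> *\<^sub>R s = t"
    using \<mu>(3) by (simp_all add: algebra_simps)
  moreover have "(1 - \<mu>) * h s + \<mu> * h (t + l) \<le> h ((1 - \<mu>) *\<^sub>R s + \<mu> *\<^sub>R (t + l))"
    "(1 - \<mu>) * h (t + l) + \<mu> * h s \<le> h ((1 - \<mu>) *\<^sub>R (t + l) + \<mu> *\<^sub>R s)"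
    using assms \<mu> by (intro concave_onD[OF conc]; simp)+
  ultimately show ?thesis
    by (simp add: algebra_simps)
qed auto

section \<open>Integrating derivatives of monotone functions\<close>

lemma negligible_countable:
  fixes S :: "'a::euclidean_space set"
  assumes "countable S"
  shows "negligible S"
  unfolding negligible_iff_null_sets
  using assms by (intro null_sets_completionI countable_imp_null_set_lborel)

lemma strict_mono_on_image_off_countable:
  fixes G :: "real \<Rightarrow> real"
  assumes "a \<le> b" and cont: "continuous_on {a..b} G" and mono: "strict_mono_on {a..b} G"
    and "countable N"
  shows "G ` ({a<..<b} - N) \<subseteq> {G a..G b}" "negligible ({G a..G b} - G ` ({a<..<b} - N))"
proof -
  show "G ` ({a<..<b} - N) \<subseteq> {G a..G b}"
  proof
    fix y assume "y \<in> G ` ({a<..<b} - N)"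
    then obtain x where "x \<in> {a<..<b}" "y = G x"
      by auto
    then show "y \<in> {G a..G b}"
      using strict_mono_onD[OF mono, of a x] strict_mono_onD[OF mono, of x b] by auto
  qed
  have "{G a..G b} - G ` ({a<..<b} - N) \<subseteq> G ` insert a (insert b N)"
  proof
    fix y assume y: "y \<in> {G a..G b} - G ` ({a<..<b} - N)"
    then obtain x where x: "x \<in> {a..b}" "G x = y"
      using IVT'[of G a y b] cont \<open>a \<le> b\<close> by auto
    then have "x \<in> insert a (insert b N)"
      using y by force
    then show "y \<in> G ` insert a (insert b N)"
      using x by blast
  qed
  then show "negligible ({G a..G b} - G ` ({a<..<b} - N))"
    by (rule negligible_subset[OF negligible_countable, rotated]) (simp add: \<open>countable N\<close>)
qed

lemma strict_mono_on_integral_deriv_off_countable: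
  fixes G G' :: "real \<Rightarrow> real"
  assumes "a \<le> b" and cont: "continuous_on {a..b} G" and mono: "strict_mono_on {a..b} G"
    and "countable N" and der: "\<And>x. x \<in> {a<..<b} - N \<Longrightarrow> (G has_real_derivative G' x) (at x)"
  shows "G' absolutely_integrable_on {a..b}" "integral {a..b} G' = G b - G a"
proof -
  \<comment> \<open>Changing variables y = G x turns the integral of G' over S into the measure of G ` S,
    which is [G a, G b] up to a countable set.\<close>
  define S where "S = {a<..<b} - N"
  have S: "S \<in> sets lebesgue"
    unfolding S_def
    by (rule sets.Diff) (simp_all add: negligible_imp_sets negligible_countable \<open>countable N\<close>)
  have neg_S: "negligible {x \<in> {a..b} - S. G' x \<noteq> 0}" "negligible {x \<in> S - {a..b}. G' x \<noteq> 0}"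
    by (rule negligible_subset[OF negligible_countable[of "insert a (insert b N)"]];
        use \<open>countable N\<close> in \<open>force simp: S_def\<close>)+
  have G'_nonneg: "0 \<le> G' x" if "x \<in> S" for x
    using mono_on_imp_deriv_nonneg[OF strict_mono_on_imp_mono_on[OF mono] der] that by (auto simp: S_def)
  have image_sub: "G ` S \<subseteq> {G a..G b}" and "negligible ({G a..G b} - G ` S)"
    unfolding S_def using strict_mono_on_image_off_countable[OF \<open>a \<le> b\<close> cont mono \<open>countable N\<close>] by auto
  moreover have "{y \<in> {G a..G b} - G ` S. (1::real) \<noteq> 0} = {G a..G b} - G ` S"
    by auto
  ultimately have neg_image: "negligible {y \<in> {G a..G b} - G ` S. (1::real) \<noteq> 0}"
    by simp
  have neg_image': "negligible {y \<in> G ` S - {G a..G b}. (1::real) \<noteq> 0}"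
    using image_sub by (simp add: Diff_eq_empty_iff[THEN iffD2])
  have "G a \<le> G b"
    using strict_mono_on_imp_mono_on[OF mono] \<open>a \<le> b\<close> by (auto intro: mono_onD)
  then have "(\<lambda>_. 1::real) absolutely_integrable_on G ` S \<and> integral (G ` S) (\<lambda>_. 1::real) = G b - G a"
    using absolutely_integrable_spike_set_eq[OF neg_image neg_image']
      integral_spike_set[OF neg_image neg_image']
    by simp
  moreover have "inj_on G S"
    using strict_mono_on_imp_inj_on[OF mono] by (rule inj_on_subset) (auto simp: S_def)
  ultimately have "(\<lambda>x. \<bar>G' x\<bar> * 1) absolutely_integrable_on S \<and> integral S (\<lambda>x. \<bar>G' x\<bar> * 1) = G b - G a"
    using has_absolute_integral_change_of_variables_1'[OF S _ \<open>inj_on G S\<close>, of G' "\<lambda>_. 1"] der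
    by (auto simp: S_def has_field_derivative_at_within)
  then have "G' absolutely_integrable_on S \<and> integral S G' = G b - G a"
    using G'_nonneg absolutely_integrable_spike[where T = S and S = "{}" and g = G']
      integral_cong[of S G' "\<lambda>x. \<bar>G' x\<bar> * 1"]
    by force
  then show "G' absolutely_integrable_on {a..b}" "integral {a..b} G' = G b - G a"
    using absolutely_integrable_spike_set_eq[of S "{a..b}" G'] integral_spike_set[of S "{a..b}" G'] neg_S
    by simp_all
qed

lemma mono_on_integral_deriv_off_countable:
  fixes g :: "real \<Rightarrow> real"
  assumes "a \<le> b" and cont: "continuous_on {a..b} g" and mono: "mono_on {a..b} g"
    and "countable N" and der: "\<And>x. x \<in> {a<..<b} - N \<Longrightarrow> (g has_real_derivative deriv g x) (at x)"
  shows "deriv g absolutely_integrable_on {a..b}" "integral {a..b} (deriv g) = g b - g a"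
proof -
  \<comment> \<open>Adding the identity makes g strictly increasing, hence injective, as change of variables needs.\<close>
  define G where "G x = g x + x" for x
  have mono_G: "strict_mono_on {a..b} G"
    by (auto simp: G_def strict_mono_on_def intro!: add_le_less_mono[OF mono_onD[OF mono]])
  have cont_G: "continuous_on {a..b} G"
    unfolding G_def by (intro continuous_intros cont)
  have der_G: "(G has_real_derivative deriv g x + 1) (at x)" if "x \<in> {a<..<b} - N" for x
    unfolding G_def using der[OF that] by (auto intro!: derivative_eq_intros)
  note G' = strict_mono_on_integral_deriv_off_countable[OF \<open>a \<le> b\<close> cont_G mono_G \<open>countable N\<close> der_G]
  have one: "(\<lambda>_. 1::real) absolutely_integrable_on {a..b}"
    by (rule absolutely_integrable_continuous_real) (rule continuous_on_const)
  have "deriv g = (\<lambda>x. (deriv g x + 1) - 1)"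
    by simp
  then show "deriv g absolutely_integrable_on {a..b}"
    using set_integral_diff(1)[OF G'(1) one] by metis
  have "integral {a..b} (deriv g) = integral {a..b} (\<lambda>x. deriv g x + 1) - integral {a..b} (\<lambda>_. 1)"
    using integral_diff[of "\<lambda>x. deriv g x + 1" "{a..b}" "\<lambda>_. 1"] G'(1) one
    by (simp add: absolutely_integrable_on_def)
  then show "integral {a..b} (deriv g) = g b - g a"
    using G'(2) \<open>a \<le> b\<close> by (simp add: G_def content_real)
qed

section \<open>Decreasing rearrangements\<close>

lemma measure_lebesgue_eq_off_countable:
  fixes A B :: "'a::euclidean_space set"
  assumes "countable X" and eq: "\<And>x. x \<notin> X \<Longrightarrow> x \<in> A \<longleftrightarrow> x \<in> B"
  shows "measure lebesgue A = measure lebesgue B"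
proof -
  have null: "X \<in> null_sets lebesgue"
    using negligible_countable[OF \<open>countable X\<close>] by (simp add: negligible_iff_null_sets)
  have neg: "negligible ((A - B) \<union> (B - A))" "negligible ((B - A) \<union> (A - B))"
    using eq by (blast intro: negligible_subset[OF negligible_countable[OF \<open>countable X\<close>]])+
  show ?thesis
  proof (cases "A \<in> sets lebesgue")
    case True
    moreover have "B \<in> sets lebesgue"
      using sets_negligible_symdiff[OF True neg(1)] .
    moreover have "AE x in lebesgue. x \<in> A \<longleftrightarrow> x \<in> B"
      by (rule AE_I'[OF null]) (use eq in blast)
    ultimately show ?thesis
      by (intro measure_eq_AE)
  next
    case False
    then have "B \<notin> sets lebesgue"
      using sets_negligible_symdiff[OF _ neg(2)] by blast
    with False show ?thesis
      by (simp add: measure_notin_sets)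
  qed
qed

lemma antimono_on_superlevel_set:
  fixes f :: "real \<Rightarrow> real"
  assumes "countable N" and anti: "antimono_on ({0..1} - N) f"
  obtains c where "c \<in> {0..1}" "\<And>s. s \<in> {0..1} - N - {c} \<Longrightarrow> t < f s \<longleftrightarrow> s < c"
    "measure lebesgue {s \<in> {0..1}. t < f s} = c"
proof -
  define A where "A = {s \<in> {0..1} - N. t < f s}"
  define c where "c = (if A = {} then 0 else Sup A)"
  have "bdd_above A"
    unfolding A_def by (auto intro: bdd_aboveI[where M = 1])
  then have "s \<le> c" if "s \<in> A" for s
    using that cSup_upper[of s A] by (auto simp: c_def)
  have c: "c \<in> {0..1}"
    using \<open>bdd_above A\<close> by (auto simp: c_def A_def intro: cSup_least order_trans[OF _ cSup_upper])
  have superlevel: "t < f s \<longleftrightarrow> s < c" if s: "s \<in> {0..1} - N - {c}" for s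
  proof
    assume "t < f s"
    then show "s < c"
      using \<open>\<And>s. s \<in> A \<Longrightarrow> s \<le> c\<close>[of s] s by (auto simp: A_def)
  next
    assume "s < c"
    then have "A \<noteq> {}" "s < Sup A"
      using s by (auto simp: c_def split: if_splits)
    then obtain s' where "s' \<in> A" "s < s'"
      using less_cSupD by blast
    then show "t < f s"
      using monotone_onD[OF anti, of s s'] s by (auto simp: A_def)
  qed
  have "measure lebesgue {s \<in> {0..1}. t < f s} = measure lebesgue {0..<c}"
    by (rule measure_lebesgue_eq_off_countable[of "insert c N"]) (use \<open>countable N\<close> superlevel c in auto)
  also have "\<dots> = c"
    using c by simp
  finally show ?thesis
    using that c superlevel by blast
qed

lemma drearr_eqI:
  assumes "\<And>t. measure lebesgue {s \<in> {0..1}. t < f s} = measure lebesgue {s \<in> {0..1}. t < g s}"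
  shows "drearr f = drearr g"
  unfolding drearr_def using assms by simp

lemma drearr_cong_off_countable:
  assumes "countable X" and "\<And>s. s \<in> {0..1} - X \<Longrightarrow> f s = g s"
  shows "drearr f = drearr g"
  by (intro drearr_eqI measure_lebesgue_eq_off_countable[OF assms(1)]) (use assms(2) in auto)

lemma antimono_on_superlevel_measure:
  fixes f :: "real \<Rightarrow> real"
  assumes "countable N" and anti: "antimono_on ({0..1} - N) f" and x: "x \<in> {0<..<1} - N"
  shows "f x < t \<Longrightarrow> measure lebesgue {s \<in> {0..1}. t < f s} \<le> x"
    and "y \<in> {x<..<1} - N \<Longrightarrow> measure lebesgue {s \<in> {0..1}. t < f s} \<le> x \<Longrightarrow> f y \<le> t"
proof -
  obtain c where c: "\<And>s. s \<in> {0..1} - N - {c} \<Longrightarrow> t < f s \<longleftrightarrow> s < c"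
    "measure lebesgue {s \<in> {0..1}. t < f s} = c"
    by (rule antimono_on_superlevel_set[OF \<open>countable N\<close> anti]) blast
  show "measure lebesgue {s \<in> {0..1}. t < f s} \<le> x" if "f x < t"
  proof (rule ccontr)
    assume "\<not> measure lebesgue {s \<in> {0..1}. t < f s} \<le> x"
    then have "t < f x"
      using c(1)[of x] c(2) x by auto
    with \<open>f x < t\<close> show False
      by simp
  qed
  show "f y \<le> t" if y: "y \<in> {x<..<1} - N" and "measure lebesgue {s \<in> {0..1}. t < f s} \<le> x"
  proof (rule ccontr)
    assume "\<not> f y \<le> t"
    moreover have "y \<noteq> c"
      using c(2) x y that(2) by auto
    ultimately have "y < c"
      using c(1)[of y] x y by auto
    with c(2) x y that(2) show False
      by auto
  qed
qed

text \<open>drearr f is the right-continuous version of f, which differs from f only at its countably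
  many jumps.\<close>

lemma drearr_antimono_on_off_countable:
  fixes f :: "real \<Rightarrow> real"
  assumes "countable N" and anti: "antimono_on ({0..1} - N) f"
  obtains E where "countable E" "\<And>s. s \<in> {0<..<1} - E \<Longrightarrow> drearr f s = f s"
proof -
  define m where "m t = measure lebesgue {s \<in> {0..1}. t < f s}" for t
  have drearr_m: "drearr f x = Inf {t. m t \<le> x}" for x
    unfolding drearr_def m_def ..
  note m_le = antimono_on_superlevel_measure(1)[OF \<open>countable N\<close> anti, folded m_def]
  note le_t = antimono_on_superlevel_measure(2)[OF \<open>countable N\<close> anti, folded m_def]
  have below: "f y \<le> drearr f x" if x: "x \<in> {0<..<1} - N" and y: "y \<in> {x<..<1} - N" for x y
    unfolding drearr_m
  proof (rule cInf_greatest)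
    show "{t. m t \<le> x} \<noteq> {}"
      using m_le[OF x, of "f x + 1"] by auto
    show "f y \<le> t" if "t \<in> {t. m t \<le> x}" for t
      using le_t[OF x y] that by simp
  qed
  have above: "drearr f x \<le> f x" if x: "x \<in> {0<..<1} - N" for x
  proof (rule dense_ge)
    have "uncountable {x<..<1}"
      using x by (simp add: uncountable_open_interval)
    then have "\<not> {x<..<1} \<subseteq> N"
      using countable_subset \<open>countable N\<close> by blast
    then obtain y where y: "y \<in> {x<..<1} - N"
      by blast
    fix t assume "f x < t"
    show "drearr f x \<le> t"
      unfolding drearr_m
    proof (rule cInf_lower)
      show "t \<in> {t. m t \<le> x}"
        using m_le[OF x \<open>f x < t\<close>] by simp
      show "bdd_below {t. m t \<le> x}"
        using le_t[OF x y] by (intro bdd_belowI[where m = "f y"]) simp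
    qed
  qed
  define E where "E = {x \<in> {0<..<1} - N. drearr f x < f x}"
  have "countable E"
  proof (rule countable_disjoint_open_intervals[of E "\<lambda>x. - f x" "\<lambda>x. - drearr f x"])
    show "- f x < - drearr f x" if "x \<in> E" for x
      using that by (simp add: E_def)
    show "- drearr f x \<le> - f z" if "x \<in> E" "z \<in> E" "x < z" for x z
      using below[of x z] that by (simp add: E_def)
  qed
  then have "countable (N \<union> E)"
    using \<open>countable N\<close> by simp
  moreover have "drearr f s = f s" if "s \<in> {0<..<1} - (N \<union> E)" for s
    using above[of s] that by (auto simp: E_def)
  ultimately show ?thesis
    by (rule that)
qed

lemma set_integral_cong_off_countable:
  fixes f g :: "real \<Rightarrow> real"
  assumes "countable X" and "\<And>x. x \<in> A - X \<Longrightarrow> f x = g x"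
  shows "(LINT x:A|lebesgue. f x) = (LINT x:A|lebesgue. g x)"
  unfolding set_lebesgue_integral_def
proof (rule integral_discrete_difference[OF assms(1)])
  show "emeasure lebesgue {x} = 0" "{x} \<in> sets lebesgue" for x :: real
    by (simp_all add: emeasure_completion)
  show "indicat_real A x *\<^sub>R f x = indicat_real A x *\<^sub>R g x" if "x \<notin> X" for x
    using assms(2)[of x] that by (cases "x \<in> A") auto
qed

lemma integral_drearr_deriv_concave:
  fixes h :: "real \<Rightarrow> real"
  assumes conc: "concave_on {0..1} h" and mono: "mono_on {0..1} h" and cont: "continuous_on {0..1} h"
    and u: "u \<in> {0..1}"
  shows "(LINT s:{0..u}|lebesgue. deriv h s) = h u - h 0"
    and "(LINT s:{0..u}|lebesgue. drearr (deriv h) s) = h u - h 0"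
proof -
  obtain N where "countable N" "0 \<in> N" "1 \<in> N"
    and der: "\<And>x. x \<in> {0..1} - N \<Longrightarrow> (h has_real_derivative deriv h x) (at x)"
    and anti: "antimono_on ({0..1} - N) (deriv h)"
    by (rule concave_on_deriv_off_countable[OF conc]) blast
  have "0 \<le> u" "continuous_on {0..u} h" "mono_on {0..u} h"
    using u continuous_on_subset[OF cont] mono_on_subset[OF mono] by auto
  moreover have "(h has_real_derivative deriv h x) (at x)" if "x \<in> {0<..<u} - N" for x
    using that u by (intro der) auto
  ultimately have "deriv h absolutely_integrable_on {0..u}" "integral {0..u} (deriv h) = h u - h 0"
    using mono_on_integral_deriv_off_countable[OF _ _ _ \<open>countable N\<close>] by blast+
  then show deriv: "(LINT s:{0..u}|lebesgue. deriv h s) = h u - h 0"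
    by (simp add: set_lebesgue_integral_eq_integral)
  obtain E where "countable E" and E: "\<And>s. s \<in> {0<..<1} - E \<Longrightarrow> drearr (deriv h) s = deriv h s"
    by (rule drearr_antimono_on_off_countable[OF \<open>countable N\<close> anti]) blast
  have "(LINT s:{0..u}|lebesgue. drearr (deriv h) s) = (LINT s:{0..u}|lebesgue. deriv h s)"
    by (rule set_integral_cong_off_countable[of "insert 0 (insert 1 E)"])
       (use \<open>countable E\<close> u E in auto)
  then show "(LINT s:{0..u}|lebesgue. drearr (deriv h) s) = h u - h 0"
    using deriv by simp
qed

section \<open>Reflecting the tail of a concave function\<close>

text \<open>h on [0, a], followed by the increments of h on [a, 1] in reverse order.\<close>

definition reflect_tail :: "real \<Rightarrow> (real \<Rightarrow> real) \<Rightarrow> real \<Rightarrow> real" where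
  "reflect_tail a h x = h (min x a) + h 1 - h (min (1 + a - x) 1)"

lemma reflect_tail_eq_left: "x \<le> a \<Longrightarrow> reflect_tail a h x = h x"
  by (simp add: reflect_tail_def min_def)

lemma reflect_tail_eq_right: "a \<le> x \<Longrightarrow> x \<le> 1 \<Longrightarrow> reflect_tail a h x = h a + h 1 - h (1 + a - x)"
  by (simp add: reflect_tail_def min_def)

lemma mono_on_reflect_tail:
  fixes h :: "real \<Rightarrow> real"
  assumes mono: "mono_on {0..1} h" and "a \<in> {0..1}"
  shows "mono_on {0..1} (reflect_tail a h)"
proof (rule mono_onI)
  fix x y :: real assume "x \<in> {0..1}" "y \<in> {0..1}" "x \<le> y"
  then have "h (min x a) \<le> h (min y a)" "h (min (1 + a - y) 1) \<le> h (min (1 + a - x) 1)"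
    using \<open>a \<in> {0..1}\<close> by (auto intro!: mono_onD[OF mono])
  then show "reflect_tail a h x \<le> reflect_tail a h y"
    by (simp add: reflect_tail_def)
qed

lemma continuous_on_reflect_tail:
  assumes cont: "continuous_on {0..1} h" and "a \<in> {0..1}"
  shows "continuous_on {0..1} (reflect_tail a h)"
  unfolding reflect_tail_def
  by (intro continuous_intros continuous_on_compose2[OF cont]) (use \<open>a \<in> {0..1}\<close> in auto)

lemma continuous_on_reflect_tail_param:
  assumes cont: "continuous_on {0..1} h" and "x \<in> {0..1}"
  shows "continuous_on {0..1} (\<lambda>a. reflect_tail a h x)"
  unfolding reflect_tail_def
  by (intro continuous_intros continuous_on_compose2[OF cont]) (use \<open>x \<in> {0..1}\<close> in auto)

lemma reflect_tail_mono_param: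
  assumes conc: "concave_on {0..1} h" and "0 \<le> a'" "a' \<le> a" and x: "x \<in> {0..1}"
  shows "reflect_tail a' h x \<le> reflect_tail a h x"
proof -
  consider "x \<le> a'" | "a' < x" "x \<le> a" | "a < x"
    by linarith
  then show ?thesis
  proof cases
    case 2
    then have "h (1 + a' - x + (x - a')) - h (1 + a' - x) \<le> h (a' + (x - a')) - h a'"
      using x assms by (intro concave_on_increment_antimono[OF conc]) auto
    then show ?thesis
      using 2 x by (simp add: reflect_tail_eq_left reflect_tail_eq_right)
  next
    case 3
    then have "h (1 + a' - x + (a - a')) - h (1 + a' - x) \<le> h (a' + (a - a')) - h a'"
      using x assms by (intro concave_on_increment_antimono[OF conc]) auto
    then show ?thesis
      using 3 x \<open>a' \<le> a\<close> by (simp add: reflect_tail_eq_right algebra_simps)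
  qed (use \<open>a' \<le> a\<close> in \<open>simp add: reflect_tail_eq_left\<close>)
qed

lemma has_real_derivative_reflect_tail_left:
  assumes "(h has_real_derivative D) (at x)" and "x < a"
  shows "(reflect_tail a h has_real_derivative D) (at x)"
  by (rule has_field_derivative_transform_within_open[OF assms(1), of "{..<a}"])
     (use \<open>x < a\<close> in \<open>auto simp: reflect_tail_eq_left\<close>)

lemma has_real_derivative_reflect_tail_right:
  assumes "(h has_real_derivative D) (at (1 + a - x))" and "a < x" "x < 1"
  shows "(reflect_tail a h has_real_derivative D) (at x)"
proof (rule has_field_derivative_transform_within_open)
  show "((\<lambda>y. h a + h 1 - h (1 + a - y)) has_real_derivative D) (at x)"
  proof -
    have "((\<lambda>y. 1 + a - y) has_real_derivative -1) (at x)"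
      by (auto intro!: derivative_eq_intros)
    from DERIV_chain2[where f = h and g = "\<lambda>y. 1 + a - y", OF assms(1) this]
    show ?thesis
      by (auto intro!: derivative_eq_intros)
  qed
  show "h a + h 1 - h (1 + a - y) = reflect_tail a h y" if "y \<in> {a<..<1}" for y
    using that by (simp add: reflect_tail_eq_right)
qed (use assms in auto)

lemma has_real_derivative_reflect_tail:
  fixes h :: "real \<Rightarrow> real"
  assumes a: "a \<in> {0..1}" and "1 \<in> N"
    and der: "\<And>x. x \<in> {0..1} - N \<Longrightarrow> (h has_real_derivative deriv h x) (at x)"
    and s: "s \<in> {0..1} - insert a (N \<union> (\<lambda>r. 1 + a - r) ` N)"
  shows "(if s < a then s else 1 + a - s) \<in> {0..1} - N"
    and "(reflect_tail a h has_real_derivative deriv h (if s < a then s else 1 + a - s)) (at s)"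
proof -
  have "1 + a - s \<notin> N"
  proof
    assume "1 + a - s \<in> N"
    then have "s \<in> (\<lambda>r. 1 + a - r) ` N"
      by (rule rev_image_eqI) simp
    with s show False
      by simp
  qed
  moreover have "a < s \<and> s < 1" if "\<not> s < a"
    using that s \<open>1 \<in> N\<close> by auto
  ultimately show *: "(if s < a then s else 1 + a - s) \<in> {0..1} - N"
    using s a by auto
  show "(reflect_tail a h has_real_derivative deriv h (if s < a then s else 1 + a - s)) (at s)"
  proof (cases "s < a")
    case True
    then show ?thesis
      using has_real_derivative_reflect_tail_left[OF der] * by simp
  next
    case False
    then show ?thesis
      using has_real_derivative_reflect_tail_right[OF der] * \<open>\<not> s < a \<Longrightarrow> a < s \<and> s < 1\<close> by simp
  qed
qed

lemma measure_Ico_Un_Ioc: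
  assumes "a \<in> {0..1}" "c \<in> {0..1}"
  shows "measure lebesgue ({0..<min a c} \<union> {1 + a - c<..1}) = c"
proof (cases "c \<le> a")
  case True
  then have "{0..<min a c} \<union> {1 + a - c<..1} = {0..<c}"
    by auto
  then show ?thesis
    using assms by (simp add: measure_completion)
next
  case False
  then have "measure lebesgue ({0..<a} \<union> {1 + a - c<..1}) = measure lebesgue {0..<a} + measure lebesgue {1 + a - c<..1}"
    using assms by (intro measure_Union) (auto simp: emeasure_completion)
  then show ?thesis
    using False assms by (simp add: measure_completion)
qed

lemma drearr_deriv_reflect_tail:
  fixes h :: "real \<Rightarrow> real"
  assumes conc: "concave_on {0..1} h" and a: "a \<in> {0..1}"
  shows "drearr (deriv (reflect_tail a h)) = drearr (deriv h)"
proof (rule drearr_eqI)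
  fix t
  obtain N where "countable N" "0 \<in> N" "1 \<in> N"
    and der: "\<And>x. x \<in> {0..1} - N \<Longrightarrow> (h has_real_derivative deriv h x) (at x)"
    and anti: "antimono_on ({0..1} - N) (deriv h)"
    by (rule concave_on_deriv_off_countable[OF conc]) blast
  obtain c where c: "c \<in> {0..1}" and superlevel: "\<And>s. s \<in> {0..1} - N - {c} \<Longrightarrow> t < deriv h s \<longleftrightarrow> s < c"
    and measure_c: "measure lebesgue {s \<in> {0..1}. t < deriv h s} = c"
    by (rule antimono_on_superlevel_set[OF \<open>countable N\<close> anti]) blast
  define X where "X = insert a (insert c N \<union> (\<lambda>r. 1 + a - r) ` insert c N)"
  have "countable X"
    using \<open>countable N\<close> by (simp add: X_def)
  have "t < deriv (reflect_tail a h) s \<longleftrightarrow> s \<in> {0..<min a c} \<union> {1 + a - c<..1}"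
    if "s \<in> {0..1} - X" for s
  proof -
    note reflect = has_real_derivative_reflect_tail[of a "insert c N" h s]
    have "(if s < a then s else 1 + a - s) \<in> {0..1} - N - {c}"
      "deriv (reflect_tail a h) s = deriv h (if s < a then s else 1 + a - s)"
      using reflect(1) DERIV_imp_deriv[OF reflect(2)] a \<open>1 \<in> N\<close> der that by (auto simp: X_def)
    then show ?thesis
      using superlevel[of "if s < a then s else 1 + a - s"] that a c by (auto simp: X_def)
  qed
  then have "measure lebesgue {s \<in> {0..1}. t < deriv (reflect_tail a h) s}
      = measure lebesgue ({0..<min a c} \<union> {1 + a - c<..1})"
    by (intro measure_lebesgue_eq_off_countable[OF \<open>countable X\<close>]) (use a c in auto)
  also have "\<dots> = c"
    using measure_Ico_Un_Ioc[OF a c] .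
  finally show "measure lebesgue {s \<in> {0..1}. t < deriv (reflect_tail a h) s}
      = measure lebesgue {s \<in> {0..1}. t < deriv h s}"
    using measure_c by simp
qed

lemma integral_deriv_reflect_tail:
  fixes h :: "real \<Rightarrow> real"
  assumes conc: "concave_on {0..1} h" and mono: "mono_on {0..1} h" and cont: "continuous_on {0..1} h"
    and a: "a \<in> {0..1}"
  shows "(LINT s:{0..1}|lebesgue. deriv (reflect_tail a h) s) = h 1 - h 0"
proof -
  obtain N where "countable N" "0 \<in> N" "1 \<in> N"
    and der: "\<And>x. x \<in> {0..1} - N \<Longrightarrow> (h has_real_derivative deriv h x) (at x)"
    and "antimono_on ({0..1} - N) (deriv h)"
    by (rule concave_on_deriv_off_countable[OF conc]) blast
  define X where "X = insert a (N \<union> (\<lambda>r. 1 + a - r) ` N)"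
  have "countable X"
    using \<open>countable N\<close> by (simp add: X_def)
  have "(reflect_tail a h has_real_derivative deriv (reflect_tail a h) s) (at s)"
    if "s \<in> {0<..<1} - X" for s
    using has_real_derivative_reflect_tail(2)[OF a \<open>1 \<in> N\<close> der, of s] that
    by (auto simp: X_def DERIV_imp_deriv)
  then have "integral {0..1} (deriv (reflect_tail a h)) = reflect_tail a h 1 - reflect_tail a h 0"
    "deriv (reflect_tail a h) absolutely_integrable_on {0..1}"
    using mono_on_integral_deriv_off_countable[OF _ continuous_on_reflect_tail[OF cont a]
        mono_on_reflect_tail[OF mono a] \<open>countable X\<close>] by auto
  moreover have "reflect_tail a h 1 - reflect_tail a h 0 = h 1 - h 0"
    using a by (simp add: reflect_tail_def)
  ultimately show ?thesis
    by (simp add: set_lebesgue_integral_eq_integral)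
qed

section \<open>Copulas and the partial-derivative Schur order\<close>

lemma copula_increment_bounds:
  assumes "copula D" "v \<in> {0..1}" "0 \<le> x" "x \<le> y" "y \<le> 1"
  shows "D x v \<le> D y v" "D y v - D x v \<le> y - x"
proof -
  have "\<forall>u1\<in>{0..1}. \<forall>u2\<in>{0..1}. \<forall>v1\<in>{0..1}. \<forall>v2\<in>{0..1}.
      u1 \<le> u2 \<longrightarrow> v1 \<le> v2 \<longrightarrow> D u2 v2 - D u2 v1 - D u1 v2 + D u1 v1 \<ge> 0"
    using assms(1) unfolding copula_def by blast
  then have "D y v - D y 0 - D x v + D x 0 \<ge> 0" "D y 1 - D y v - D x 1 + D x v \<ge> 0"
    using assms(2-) by auto
  then show "D x v \<le> D y v" "D y v - D x v \<le> y - x"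
    using assms by (auto simp: copula_def)
qed

lemma copula_mono_on:
  assumes "copula D" "v \<in> {0..1}"
  shows "mono_on {0..1} (\<lambda>u. D u v)"
  using copula_increment_bounds(1)[OF assms] by (auto intro: mono_onI)

lemma copula_continuous_on:
  assumes "copula D" "v \<in> {0..1}"
  shows "continuous_on {0..1} (\<lambda>u. D u v)"
proof (rule lipschitz_on_continuous_on[of 1], rule lipschitz_onI)
  fix x y :: real assume "x \<in> {0..1}" "y \<in> {0..1}"
  then show "dist (D x v) (D y v) \<le> 1 * dist x y"
    using copula_increment_bounds[OF assms, of x y] copula_increment_bounds[OF assms, of y x]
    by (cases "x \<le> y") (auto simp: dist_real_def)
qed simp

lemma deriv_cong_unit_interval:
  fixes f g :: "real \<Rightarrow> real"
  assumes "\<And>u. u \<in> {0<..<1} \<Longrightarrow> f u = g u" and "s \<in> {0<..<1}"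
  shows "deriv f s = deriv g s"
proof (rule deriv_cong_ev[OF _ refl])
  have "eventually (\<lambda>u. u \<in> {0<..<1}) (nhds s)"
    using assms(2) by (intro eventually_nhds_in_open) (simp_all add: open_greaterThanLessThan)
  then show "eventually (\<lambda>u. f u = g u) (nhds s)"
    by (rule eventually_mono) (use assms(1) in blast)
qed

lemma schur_le_cong_off_countable:
  assumes "countable X" "\<And>s. s \<in> {0..1} - X \<Longrightarrow> f s = f' s" "\<And>s. s \<in> {0..1} - X \<Longrightarrow> g s = g' s"
  shows "schur_le f g \<longleftrightarrow> schur_le f' g'"
  using drearr_cong_off_countable[OF assms(1,2)] drearr_cong_off_countable[OF assms(1,3)]
    set_integral_cong_off_countable[OF assms(1), of "{0..1}" f f']
    set_integral_cong_off_countable[OF assms(1), of "{0..1}" g g'] assms(2,3)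
  unfolding schur_le_def by simp

lemma d1S_le_cong:
  assumes "\<And>u v. u \<in> {0..1} \<Longrightarrow> v \<in> {0..1} \<Longrightarrow> D u v = D' u v"
    and "\<And>u v. u \<in> {0..1} \<Longrightarrow> v \<in> {0..1} \<Longrightarrow> E u v = E' u v"
  shows "d1S_le D E \<longleftrightarrow> d1S_le D' E'"
proof -
  have "schur_le (\<lambda>u. partial1 D u v) (\<lambda>u. partial1 E u v) \<longleftrightarrow>
      schur_le (\<lambda>u. partial1 D' u v) (\<lambda>u. partial1 E' u v)" if v: "v \<in> {0..1}" for v
  proof -
    have "deriv (\<lambda>u. D u v) s = deriv (\<lambda>u. D' u v) s" "deriv (\<lambda>u. E u v) s = deriv (\<lambda>u. E' u v) s"
      if "s \<in> {0<..<1}" for s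
      using that assms v by (auto intro!: deriv_cong_unit_interval)
    then show ?thesis
      unfolding partial1_def by (intro schur_le_cong_off_countable[of "{0,1}"]) auto
  qed
  then show ?thesis
    unfolding d1S_le_def by blast
qed

lemma d1S_eq_cong:
  assumes "\<And>u v. u \<in> {0..1} \<Longrightarrow> v \<in> {0..1} \<Longrightarrow> D u v = D' u v"
  shows "d1S_eq D C \<longleftrightarrow> d1S_eq D' C"
  unfolding d1S_eq_def
  using d1S_le_cong[where D = D and D' = D' and E = C and E' = C]
    d1S_le_cong[where D = C and D' = C and E = D and E' = D'] assms
  by simp

lemma copula_cong:
  assumes "\<And>u v. u \<in> {0..1} \<Longrightarrow> v \<in> {0..1} \<Longrightarrow> D u v = E u v"
  shows "copula D \<longleftrightarrow> copula E"
  using assms unfolding copula_def by simp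

lemma SI_copula_cong:
  assumes "\<And>u v. u \<in> {0..1} \<Longrightarrow> v \<in> {0..1} \<Longrightarrow> D u v = E u v"
  shows "SI_copula D \<longleftrightarrow> SI_copula E"
proof -
  have "concave_on {0..1} (\<lambda>u. D u v) \<longleftrightarrow> concave_on {0..1} (\<lambda>u. E u v)" if "v \<in> {0..1}" for v
    using assms that by (intro concave_on_cong) auto
  then show ?thesis
    unfolding SI_copula_def using copula_cong[OF assms] by auto
qed

lemma SD_copula_cong:
  assumes "\<And>u v. u \<in> {0..1} \<Longrightarrow> v \<in> {0..1} \<Longrightarrow> D u v = E u v"
  shows "SD_copula D \<longleftrightarrow> SD_copula E"
proof -
  have "convex_on {0..1} (\<lambda>u. D u v) \<longleftrightarrow> convex_on {0..1} (\<lambda>u. E u v)" if "v \<in> {0..1}" for v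
    using assms that by (intro convex_on_cong) auto
  then show ?thesis
    unfolding SD_copula_def using copula_cong[OF assms] by auto
qed

lemma schur_le_trans: "schur_le f g \<Longrightarrow> schur_le g h \<Longrightarrow> schur_le f h"
  unfolding schur_le_def by (auto intro: order_trans)

lemma d1S_eq_refl: "d1S_eq D D"
  by (simp add: d1S_eq_def d1S_le_def schur_le_def)

lemma d1S_eq_sym: "d1S_eq D E \<Longrightarrow> d1S_eq E D"
  by (simp add: d1S_eq_def)

lemma d1S_eq_trans: "d1S_eq D E \<Longrightarrow> d1S_eq E F \<Longrightarrow> d1S_eq D F"
  unfolding d1S_eq_def d1S_le_def by (blast intro: schur_le_trans)

lemma d1S_eq_integral_drearr:
  assumes "d1S_eq D E" "v \<in> {0..1}" "x \<in> {0<..<1}"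
  shows "(LINT s:{0..x}|lebesgue. drearr (\<lambda>u. partial1 D u v) s)
    = (LINT s:{0..x}|lebesgue. drearr (\<lambda>u. partial1 E u v) s)"
proof -
  have "schur_le (\<lambda>u. partial1 D u v) (\<lambda>u. partial1 E u v)" "schur_le (\<lambda>u. partial1 E u v) (\<lambda>u. partial1 D u v)"
    using assms(1,2) unfolding d1S_eq_def d1S_le_def by auto
  then show ?thesis
    using assms(3) unfolding schur_le_def by (intro antisym) auto
qed

lemma SI_copula_integral_drearr_partial1:
  assumes "SI_copula D" "v \<in> {0..1}" "x \<in> {0..1}"
  shows "(LINT s:{0..x}|lebesgue. drearr (\<lambda>u. partial1 D u v) s) = D x v"
proof -
  have cop: "copula D" and conc: "concave_on {0..1} (\<lambda>u. D u v)"
    using assms by (auto simp: SI_copula_def)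
  have "(LINT s:{0..x}|lebesgue. drearr (deriv (\<lambda>u. D u v)) s) = D x v - D 0 v"
    by (rule integral_drearr_deriv_concave(2)[OF conc copula_mono_on[OF cop] copula_continuous_on[OF cop]])
       (use assms in auto)
  moreover have "D 0 v = 0"
    using cop assms by (simp add: copula_def)
  ultimately show ?thesis
    by (simp add: partial1_def)
qed

lemma SD_copula_integral_drearr_partial1:
  assumes "SD_copula D" "v \<in> {0..1}" "x \<in> {0..1}"
  shows "(LINT s:{0..x}|lebesgue. drearr (\<lambda>u. partial1 D u v) s) = v - D (1 - x) v"
proof -
  have cop: "copula D" and cvx: "convex_on {0..1} (\<lambda>u. D u v)"
    using assms by (auto simp: SD_copula_def)
  \<comment> \<open>An SD section is the reflected tail, with a = 0, of a concave function.\<close>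
  define e where "e y = v - D (1 - y) v" for y
  have conc: "concave_on {0..1} e"
    unfolding e_def
    by (intro concave_on_diff convex_on_reflect_unit_interval cvx) (simp add: concave_on_const)
  have mono: "mono_on {0..1} e"
    using mono_onD[OF copula_mono_on[OF cop \<open>v \<in> _\<close>]] by (auto simp: e_def intro!: mono_onI)
  have cont: "continuous_on {0..1} e"
    unfolding e_def
    by (intro continuous_intros continuous_on_compose2[OF copula_continuous_on[OF cop \<open>v \<in> _\<close>]]) auto
  have "D u v = reflect_tail 0 e u" if "u \<in> {0..1}" for u
    using that cop \<open>v \<in> _\<close> by (simp add: reflect_tail_def e_def copula_def)
  then have "drearr (\<lambda>u. partial1 D u v) = drearr (deriv (reflect_tail 0 e))"
    unfolding partial1_def
    by (intro drearr_cong_off_countable[of "{0,1}"] deriv_cong_unit_interval) auto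
  also have "\<dots> = drearr (deriv e)"
    by (rule drearr_deriv_reflect_tail[OF conc]) simp
  finally have "(LINT s:{0..x}|lebesgue. drearr (\<lambda>u. partial1 D u v) s) = e x - e 0"
    using integral_drearr_deriv_concave(2)[OF conc mono cont \<open>x \<in> _\<close>] by simp
  then show ?thesis
    using cop \<open>v \<in> _\<close> by (simp add: e_def copula_def)
qed

lemma SI_copula_eq_if_d1S_eq:
  assumes "SI_copula D" "SI_copula E" "d1S_eq D E" and u: "u \<in> {0..1}" and v: "v \<in> {0..1}"
  shows "D u v = E u v"
proof (cases "u \<in> {0<..<1}")
  case True
  then show ?thesis
    using d1S_eq_integral_drearr[OF assms(3) v True]
      SI_copula_integral_drearr_partial1[OF assms(1) v] SI_copula_integral_drearr_partial1[OF assms(2) v]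
    by simp
next
  case False
  with u have "u = 0 \<or> u = 1"
    by auto
  then show ?thesis
    using assms(1,2) v by (auto simp: SI_copula_def copula_def)
qed

lemma SD_copula_eq_if_d1S_eq:
  assumes "SD_copula D" "SD_copula E" "d1S_eq D E" and u: "u \<in> {0..1}" and v: "v \<in> {0..1}"
  shows "D u v = E u v"
proof (cases "u \<in> {0<..<1}")
  case True
  then have "1 - u \<in> {0<..<1}"
    by simp
  then show ?thesis
    using d1S_eq_integral_drearr[OF assms(3) v]
      SD_copula_integral_drearr_partial1[OF assms(1) v, of "1 - u"]
      SD_copula_integral_drearr_partial1[OF assms(2) v, of "1 - u"]
    by simp
next
  case False
  with u have "u = 0 \<or> u = 1"
    by auto
  then show ?thesis
    using assms(1,2) v by (auto simp: SD_copula_def copula_def)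
qed

text \<open>Reduces evaluating C_up and C_down on the unit square to uniqueness on the unit square.\<close>

lemma THE_vanishing_off_unit_sq:
  fixes P R :: "(real \<Rightarrow> real \<Rightarrow> real) \<Rightarrow> bool"
  assumes cong: "\<And>D E. (\<And>u v. u \<in> {0..1} \<Longrightarrow> v \<in> {0..1} \<Longrightarrow> D u v = E u v) \<Longrightarrow>
      P D \<Longrightarrow> R D \<Longrightarrow> P E \<and> R E"
    and unique: "\<And>E u v. P E \<Longrightarrow> R E \<Longrightarrow> u \<in> {0..1} \<Longrightarrow> v \<in> {0..1} \<Longrightarrow> E u v = D u v"
    and "P D" "R D" "u \<in> {0..1}" "v \<in> {0..1}"
  shows "(THE E. P E \<and> R E \<and> (\<forall>u v. (u, v) \<notin> unit_sq \<longrightarrow> E u v = 0)) u v = D u v"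
proof -
  define D0 where "D0 u v = (if (u, v) \<in> unit_sq then D u v else 0)" for u v
  have on_sq: "D u v = D0 u v" if "u \<in> {0..1}" "v \<in> {0..1}" for u v
    using that by (simp add: D0_def unit_sq_def)
  have "(THE E. P E \<and> R E \<and> (\<forall>u v. (u, v) \<notin> unit_sq \<longrightarrow> E u v = 0)) = D0"
  proof (rule the_equality)
    have "P D0 \<and> R D0"
      using cong[OF on_sq \<open>P D\<close> \<open>R D\<close>] .
    then show "P D0 \<and> R D0 \<and> (\<forall>u v. (u, v) \<notin> unit_sq \<longrightarrow> D0 u v = 0)"
      by (simp add: D0_def)
  next
    fix E assume E: "P E \<and> R E \<and> (\<forall>u v. (u, v) \<notin> unit_sq \<longrightarrow> E u v = 0)"
    show "E = D0"
    proof (intro ext)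
      fix u v
      show "E u v = D0 u v"
        using E unique[of E u v] by (cases "(u, v) \<in> unit_sq") (auto simp: D0_def unit_sq_def)
    qed
  qed
  then show ?thesis
    using on_sq assms(5,6) by simp
qed

lemma C_up_eqI:
  assumes "SI_copula D" "d1S_eq D C" "u \<in> {0..1}" "v \<in> {0..1}"
  shows "C_up C u v = D u v"
  unfolding C_up_def
proof (rule THE_vanishing_off_unit_sq[where P = SI_copula and R = "\<lambda>E. d1S_eq E C"])
  show "SI_copula E \<and> d1S_eq E C"
    if "\<And>u v. u \<in> {0..1} \<Longrightarrow> v \<in> {0..1} \<Longrightarrow> D' u v = E u v" "SI_copula D'" "d1S_eq D' C" for D' E
    using that SI_copula_cong[OF that(1)] d1S_eq_cong[OF that(1)] by simp
  show "E u v = D u v" if "SI_copula E" "d1S_eq E C" "u \<in> {0..1}" "v \<in> {0..1}" for E u v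
    using SI_copula_eq_if_d1S_eq[OF that(1) assms(1) d1S_eq_trans[OF that(2) d1S_eq_sym[OF assms(2)]]] that(3,4) .
qed (use assms in auto)

lemma C_down_eqI:
  assumes "SD_copula D" "d1S_eq D C" "u \<in> {0..1}" "v \<in> {0..1}"
  shows "C_down C u v = D u v"
  unfolding C_down_def
proof (rule THE_vanishing_off_unit_sq[where P = SD_copula and R = "\<lambda>E. d1S_eq E C"])
  show "SD_copula E \<and> d1S_eq E C"
    if "\<And>u v. u \<in> {0..1} \<Longrightarrow> v \<in> {0..1} \<Longrightarrow> D' u v = E u v" "SD_copula D'" "d1S_eq D' C" for D' E
    using that SD_copula_cong[OF that(1)] d1S_eq_cong[OF that(1)] by simp
  show "E u v = D u v" if "SD_copula E" "d1S_eq E C" "u \<in> {0..1}" "v \<in> {0..1}" for E u v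
    using SD_copula_eq_if_d1S_eq[OF that(1) assms(1) d1S_eq_trans[OF that(2) d1S_eq_sym[OF assms(2)]]] that(3,4) .
qed (use assms in auto)

lemma d1S_eq_reflect_tail:
  assumes "SI_copula C" and a: "a \<in> {0..1}"
    and D: "\<And>u v. u \<in> {0..1} \<Longrightarrow> v \<in> {0..1} \<Longrightarrow> D u v = reflect_tail a (\<lambda>x. C x v) u"
  shows "d1S_eq D C"
proof -
  have "drearr (\<lambda>u. partial1 D u v) = drearr (\<lambda>u. partial1 C u v)
      \<and> (LINT s:{0..1}|lebesgue. partial1 D s v) = (LINT s:{0..1}|lebesgue. partial1 C s v)"
    if v: "v \<in> {0..1}" for v
  proof -
    define h where "h = (\<lambda>x. C x v)"
    have cop: "copula C" and conc: "concave_on {0..1} h"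
      using \<open>SI_copula C\<close> v by (auto simp: SI_copula_def h_def)
    have mono: "mono_on {0..1} h" and cont: "continuous_on {0..1} h"
      unfolding h_def using copula_mono_on[OF cop v] copula_continuous_on[OF cop v] by auto
    have partial1_D: "partial1 D s v = deriv (reflect_tail a h) s" if "s \<in> {0..1} - {0, 1}" for s
      unfolding partial1_def h_def using D v that by (intro deriv_cong_unit_interval) auto
    have partial1_C: "(\<lambda>u. partial1 C u v) = deriv h"
      by (simp add: partial1_def h_def)
    have "drearr (\<lambda>u. partial1 D u v) = drearr (deriv (reflect_tail a h))"
      using partial1_D by (intro drearr_cong_off_countable[of "{0,1}"]) auto
    also have "\<dots> = drearr (\<lambda>u. partial1 C u v)"
      unfolding partial1_C by (rule drearr_deriv_reflect_tail[OF conc a])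
    finally have "drearr (\<lambda>u. partial1 D u v) = drearr (\<lambda>u. partial1 C u v)" .
    moreover have "(LINT s:{0..1}|lebesgue. partial1 D s v) = (LINT s:{0..1}|lebesgue. deriv (reflect_tail a h) s)"
      using partial1_D by (intro set_integral_cong_off_countable[of "{0,1}"]) auto
    moreover have "(LINT s:{0..1}|lebesgue. deriv (reflect_tail a h) s) = (LINT s:{0..1}|lebesgue. partial1 C s v)"
      using integral_deriv_reflect_tail[OF conc mono cont a] integral_drearr_deriv_concave(1)[OF conc mono cont, of 1]
      by (simp add: partial1_C)
    ultimately show ?thesis
      by simp
  qed
  then show ?thesis
    unfolding d1S_eq_def d1S_le_def schur_le_def by simp
qed

lemma SD_copula_reflect_tail_zero:
  assumes "SI_copula C" "copula D"
    and D: "\<And>u v. u \<in> {0..1} \<Longrightarrow> v \<in> {0..1} \<Longrightarrow> D u v = reflect_tail 0 (\<lambda>x. C x v) u"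
  shows "SD_copula D"
  unfolding SD_copula_def
proof (intro conjI ballI \<open>copula D\<close>)
  fix v :: real assume v: "v \<in> {0..1}"
  have "concave_on {0..1} (\<lambda>u. C u v)"
    using \<open>SI_copula C\<close> v by (simp add: SI_copula_def)
  then have "convex_on {0..1} (\<lambda>u. C 0 v + C 1 v - C (1 - u) v)"
    by (intro convex_on_diff concave_on_reflect_unit_interval) (simp add: convex_on_const)
  moreover have "D u v = C 0 v + C 1 v - C (1 - u) v" if "u \<in> {0..1}" for u
    using D[OF that v] that by (simp add: reflect_tail_def)
  ultimately show "convex_on {0..1} (\<lambda>u. D u v)"
    using convex_on_cong[of "{0..1}" "\<lambda>u. D u v" "\<lambda>u. C 0 v + C 1 v - C (1 - u) v"] by simp
qed

section \<open>The copulas C_p\<close>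

locale copula_distributed = prob_space M for M :: "'a measure" +
  fixes U V :: "'a \<Rightarrow> real" and C :: "real \<Rightarrow> real \<Rightarrow> real"
  assumes copula: "copula C"
    and measurable_U [measurable]: "U \<in> borel_measurable M"
    and measurable_V [measurable]: "V \<in> borel_measurable M"
    and distribution: "\<And>u v. u \<in> {0..1} \<Longrightarrow> v \<in> {0..1} \<Longrightarrow>
      prob {\<omega> \<in> space M. U \<omega> \<le> u \<and> V \<omega> \<le> v} = C u v"
begin

lemma C_margins: "t \<in> {0..1} \<Longrightarrow> C t 0 = 0 \<and> C 0 t = 0 \<and> C t 1 = t \<and> C 1 t = t"
  using copula by (simp add: copula_def)

lemma AE_le_1: "AE \<omega> in M. U \<omega> \<le> 1 \<and> V \<omega> \<le> 1"
proof -
  have "prob {\<omega> \<in> space M. U \<omega> \<le> 1 \<and> V \<omega> \<le> 1} = 1"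
    using distribution[of 1 1] C_margins[of 1] by simp
  then show ?thesis
    by (auto dest: AE_prob_1)
qed

lemma prob_U_le:
  assumes "t \<in> {0..1}"
  shows "prob {\<omega> \<in> space M. U \<omega> \<le> t} = t"
proof -
  have "prob {\<omega> \<in> space M. U \<omega> \<le> t} = prob {\<omega> \<in> space M. U \<omega> \<le> t \<and> V \<omega> \<le> 1}"
    by (rule finite_measure_eq_AE) (use AE_le_1 in \<open>eventually_elim, auto\<close>)
  then show ?thesis
    using distribution[of t 1] C_margins[of t] assms by simp
qed

lemma prob_V_le:
  assumes "t \<in> {0..1}"
  shows "prob {\<omega> \<in> space M. V \<omega> \<le> t} = t"
proof -
  have "prob {\<omega> \<in> space M. V \<omega> \<le> t} = prob {\<omega> \<in> space M. U \<omega> \<le> 1 \<and> V \<omega> \<le> t}"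
    by (rule finite_measure_eq_AE) (use AE_le_1 in \<open>eventually_elim, auto\<close>)
  then show ?thesis
    using distribution[of 1 t] C_margins[of t] assms by simp
qed

lemma AE_U_pos: "AE \<omega> in M. 0 < U \<omega>"
proof -
  have "AE \<omega> in M. \<omega> \<notin> {\<omega> \<in> space M. U \<omega> \<le> 0}"
    using prob_U_le[of 0] by (subst prob_eq_0[symmetric]) auto
  then show ?thesis
    by (auto elim: AE_mp)
qed

lemma prob_U_eq: assumes "w \<in> {0..1}" shows "prob {\<omega> \<in> space M. U \<omega> = w} = 0"
proof (rule antisym[OF field_le_epsilon measure_nonneg])
  fix e :: real assume "0 < e"
  show "prob {\<omega> \<in> space M. U \<omega> = w} \<le> 0 + e"
  proof (cases "w = 0")
    case False
    define d where "d = min e w"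
    have d: "0 < d" "d \<le> w" "d \<le> e"
      using \<open>0 < e\<close> False assms by (auto simp: d_def)
    have "prob {\<omega> \<in> space M. U \<omega> = w}
        \<le> prob ({\<omega> \<in> space M. U \<omega> \<le> w} - {\<omega> \<in> space M. U \<omega> \<le> w - d})"
      using d by (intro finite_measure_mono) auto
    also have "\<dots> = d"
      using d assms by (subst finite_measure_Diff) (auto simp: prob_U_le)
    finally show ?thesis
      using d by simp
  next
    case True
    have "prob {\<omega> \<in> space M. U \<omega> = w} \<le> prob {\<omega> \<in> space M. U \<omega> \<le> 0}"
      using True by (intro finite_measure_mono) auto
    then show ?thesis
      using prob_U_le[of 0] \<open>0 < e\<close> by simp
  qed
qed

lemma AE_U_neq: "w \<in> {0..1} \<Longrightarrow> AE \<omega> in M. U \<omega> \<noteq> w"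
  using prob_U_eq[of w] by (subst (asm) prob_eq_0) (auto elim: AE_mp)

lemma measurable_Tp_U [measurable]: "(\<lambda>\<omega>. Tp p (U \<omega>)) \<in> borel_measurable M"
  unfolding Tp_def by measurable

lemma Cp_eq_reflect_tail:
  assumes p: "p \<in> {0..1}" and u: "u \<in> {0..1}" and v: "v \<in> {0..1}"
  shows "Cp M U V p u v = reflect_tail (1 - p) (\<lambda>x. C x v) u"
proof -
  define m1 where "m1 = min u (1 - p)"
  define m2 where "m2 = min (1 + (1 - p) - u) 1"
  have m1: "m1 \<in> {0..1}" "m1 \<le> 1 - p" and m2: "m2 \<in> {0..1}" "1 - p \<le> m2"
    using p u by (auto simp: m1_def m2_def)
  define A where "A = {\<omega> \<in> space M. Tp p (U \<omega>) \<le> u \<and> V \<omega> \<le> v}"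
  define B1 where "B1 = {\<omega> \<in> space M. U \<omega> \<le> m1 \<and> V \<omega> \<le> v}"
  define B2 where "B2 = {\<omega> \<in> space M. V \<omega> \<le> v} - {\<omega> \<in> space M. U \<omega> \<le> m2 \<and> V \<omega> \<le> v}"
  have [measurable]: "A \<in> sets M" "B1 \<in> sets M" "B2 \<in> sets M"
    unfolding A_def B1_def B2_def by measurable
  \<comment> \<open>The only boundary case is a tie U = m2, which has probability 0.\<close>
  have "AE \<omega> in M. \<omega> \<in> A \<longleftrightarrow> \<omega> \<in> B1 \<union> B2"
    using AE_U_pos AE_le_1 AE_U_neq[OF m2(1)]
  proof eventually_elim
    case (elim \<omega>)
    show ?case
    proof (cases "U \<omega> \<le> 1 - p")
      case True
      then show ?thesis
        using elim m1 m2 by (auto simp: A_def B1_def B2_def Tp_def m1_def)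
    next
      case False
      then have "Tp p (U \<omega>) \<le> u \<longleftrightarrow> m2 < U \<omega>"
        using elim by (auto simp: Tp_def m2_def)
      then show ?thesis
        using elim m1 m2 False by (auto simp: A_def B1_def B2_def)
    qed
  qed
  then have "prob A = prob (B1 \<union> B2)"
    by (rule finite_measure_eq_AE) auto
  also have "\<dots> = prob B1 + prob B2"
    using m1 m2 by (intro finite_measure_Union) (auto simp: B1_def B2_def)
  also have "prob B2 = v - C m2 v"
    unfolding B2_def using prob_V_le[OF v] distribution[OF m2(1) v] by (subst finite_measure_Diff) auto
  also have "prob B1 = C m1 v"
    unfolding B1_def using distribution[OF m1(1) v] .
  finally show ?thesis
    using C_margins[OF v] by (simp add: Cp_def A_def reflect_tail_def m1_def m2_def)
qed

lemma copula_Cp: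
  assumes p: "p \<in> {0..1}"
  shows "copula (Cp M U V p)"
  unfolding copula_def
proof (intro conjI ballI impI)
  fix u v :: real
  show "Cp M U V p u v \<in> {0..1}"
    unfolding Cp_def by simp
next
  fix t :: real assume t: "t \<in> {0..1}"
  show "Cp M U V p t 0 = 0" "Cp M U V p 0 t = 0" "Cp M U V p t 1 = t" "Cp M U V p 1 t = t"
    using p t C_margins[of t] C_margins[of 0] C_margins[of 1] C_margins[of "min t (1 - p)"]
      C_margins[of "min (1 + (1 - p) - t) 1"]
    by (auto simp: Cp_eq_reflect_tail reflect_tail_def min_def)
next
  fix u1 u2 v1 v2 :: real assume "u1 \<le> u2" "v1 \<le> v2"
  define A where "A u v = {\<omega> \<in> space M. Tp p (U \<omega>) \<le> u \<and> V \<omega> \<le> v}" for u v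
  have [measurable]: "A u v \<in> sets M" for u v
    unfolding A_def by measurable
  have "A u2 v1 \<inter> A u1 v2 = A u1 v1"
    using \<open>u1 \<le> u2\<close> \<open>v1 \<le> v2\<close> by (auto simp: A_def)
  then have "prob (A u2 v1 \<union> A u1 v2) = prob (A u2 v1) + prob (A u1 v2) - prob (A u1 v1)"
    using measure_Un3[of "A u2 v1" M "A u1 v2"] by (simp add: fmeasurable_def emeasure_eq_measure)
  moreover have "prob (A u2 v1 \<union> A u1 v2) \<le> prob (A u2 v2)"
    using \<open>u1 \<le> u2\<close> \<open>v1 \<le> v2\<close> by (intro finite_measure_mono) (auto simp: A_def)
  ultimately show "Cp M U V p u2 v2 - Cp M U V p u2 v1 - Cp M U V p u1 v2 + Cp M U V p u1 v1 \<ge> 0"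
    unfolding Cp_def A_def by linarith
qed

lemma Cp_0:
  assumes "u \<in> {0..1}" "v \<in> {0..1}"
  shows "Cp M U V 0 u v = C u v"
  using assms by (simp add: Cp_eq_reflect_tail reflect_tail_eq_left)

lemma Cp_antimono:
  assumes "SI_copula C" "0 \<le> p" "p \<le> p'" "p' \<le> 1" "u \<in> {0..1}" "v \<in> {0..1}"
  shows "Cp M U V p' u v \<le> Cp M U V p u v"
proof -
  have "concave_on {0..1} (\<lambda>x. C x v)"
    using assms(1,6) by (simp add: SI_copula_def)
  then show ?thesis
    using reflect_tail_mono_param[of "\<lambda>x. C x v" "1 - p'" "1 - p" u] assms(2-)
    by (simp add: Cp_eq_reflect_tail)
qed

lemma continuous_on_Cp:
  assumes u: "u \<in> {0..1}" and v: "v \<in> {0..1}"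
  shows "continuous_on {0..1} (\<lambda>p. Cp M U V p u v)"
proof (rule continuous_on_eq)
  show "continuous_on {0..1} (\<lambda>p. reflect_tail (1 - p) (\<lambda>x. C x v) u)"
    by (rule continuous_on_compose2[OF continuous_on_reflect_tail_param[OF copula_continuous_on[OF copula v] u]])
       (auto intro!: continuous_intros)
  show "reflect_tail (1 - p) (\<lambda>x. C x v) u = Cp M U V p u v" if "p \<in> {0..1}" for p
    using that u v by (simp add: Cp_eq_reflect_tail)
qed

end

theorem lemma4p1:
  fixes M :: "'a measure" and U V :: "'a \<Rightarrow> real" and C :: "real \<Rightarrow> real \<Rightarrow> real"
  assumes SI: "SI_copula C"
    and M: "prob_space M"
    and U: "U \<in> borel_measurable M" and V: "V \<in> borel_measurable M"
    and dist: "\<forall>u\<in>{0..1}. \<forall>v\<in>{0..1}.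
                 measure M {\<omega>\<in>space M. U \<omega> \<le> u \<and> V \<omega> \<le> v} = C u v"
  shows "(\<forall>p\<in>{0..1}. copula (Cp M U V p))
    \<and> (\<forall>u\<in>{0..1}. \<forall>v\<in>{0..1}. Cp M U V 0 u v = C u v \<and> C u v = C_up C u v)
    \<and> (\<forall>u\<in>{0..1}. \<forall>v\<in>{0..1}. Cp M U V 1 u v = C_down C u v)
    \<and> (\<forall>p\<in>{0..1}. d1S_eq (Cp M U V p) C)
    \<and> (\<forall>p p'. 0 \<le> p \<longrightarrow> p \<le> p' \<longrightarrow> p' \<le> 1 \<longrightarrow>
          (\<forall>u\<in>{0..1}. \<forall>v\<in>{0..1}. Cp M U V p u v \<ge> Cp M U V p' u v))
    \<and> (\<forall>u\<in>{0..1}. \<forall>v\<in>{0..1}. continuous_on {0..1} (\<lambda>p. Cp M U V p u v))"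
proof -
  interpret copula_distributed M U V C
    using M U V dist SI by (simp add: copula_distributed_def copula_distributed_axioms_def SI_copula_def)
  have d1S_eq_Cp: "d1S_eq (Cp M U V p) C" if "p \<in> {0..1}" for p
    using d1S_eq_reflect_tail[OF SI, of "1 - p"] that by (simp add: Cp_eq_reflect_tail)
  have "SD_copula (Cp M U V 1)"
    using SD_copula_reflect_tail_zero[OF SI copula_Cp] by (simp add: Cp_eq_reflect_tail)
  then have "C_down C u v = Cp M U V 1 u v" if "u \<in> {0..1}" "v \<in> {0..1}" for u v
    using C_down_eqI d1S_eq_Cp that by simp
  moreover have "C_up C u v = C u v" if "u \<in> {0..1}" "v \<in> {0..1}" for u v
    using C_up_eqI[OF SI d1S_eq_refl that] .
  ultimately show ?thesis
    using copula_Cp Cp_0 d1S_eq_Cp Cp_antimono[OF SI] continuous_on_Cp by simp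
qed

end
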